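(* Let $(\vec U,\le,{}^*,\vee,\wedge)$ be a universe of separations containing a finite separation system $(\vec S,\le,{}^* )$ (with the induced order and involution). Let $\mathcal F\subseteq 2^{\vec S}$ be a standard set of stars, and suppose $\vec S$ is $\mathcal F$-separable. Then exactly one of the following holds: (i) there exists an $S$-tree over $\mathcal F$; (ii) there exists an $\mathcal F$-tangle of $S$.
   Context: A separation system $(\vec S,\le,{}^* )$ is a partially ordered set with an order-reversing involution ${}^*$ ($\vec r\le\vec s\iff\vec r^{\,*}\ge\vec s^{\,*}$); write $\overleftarrow s:=\vec s^{\,*}$, a separation is $s=\{\vec s,\overleftarrow s\}$, $S$ is the set of separations, $s$ is degenerate if $\vec s=\overleftarrow s$, and $\vec r$ is trivial in $\vec S$ if there is $s\in S$ with $\vec r<\vec s$ and $\vec r<\overleftarrow s$. A star is a nonempty $\sigma\subseteq\vec S$ with $\vec r\le\overleftarrow s$ for all distinct $\vec r,\vec s\in\sigma$. A universe of separations is a separation system in which any two elements have a supremum $\vee$ and infimum $\wedge$. An orientation of $S$ contains exactly one of $\vec s,\overleftarrow s$ for each $s\in S$; a set $O\subseteq\vec S$ is consistent if there are no distinct $r,s\in S$ with orientations $\vec r<\vec s$ such that $\overleftarrow r,\vec s\in O$; $O$ avoids $\mathcal F$ if no subset of $O$ is in $\mathcal F$; an $\mathcal F$-tangle of $S$ is a consistent orientation of $S$ avoiding $\mathcal F$. $\mathcal F$ forces $\vec r$ if $\{\overleftarrow r\}\in\mathcal F$ or $r$ is degenerate; $\mathcal F$ is standard if it forces every trivial element of $\vec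 S$ (so every element not forced by a standard $\mathcal F$ is nontrivial and nondegenerate). An $S$-tree is a pair $(T,\alpha)$, $T$ a finite tree with at least one edge, $\alpha:\vec E(T)\to\vec S$ with $\alpha(y,x)=\alpha(x,y)^*$; it is over $\mathcal F$ if $\alpha(\{(y,t):yt\in E(T)\})\in\mathcal F$ for every node $t$. For nontrivial nondegenerate $\vec r\in\vec S$, $\vec S_{\ge\vec r}$ is the set of all orientations of those $s\in S$ having an orientation $\ge\vec r$; for $\vec s_0\ge\vec r$ the shifting map $f^{\vec r}_{\vec s_0}:\vec S_{\ge\vec r}\to\vec U$ is given by $f(\vec s)=\vec s\vee\vec s_0$, $f(\overleftarrow s)=(\vec s\vee\vec s_0)^*$ for all $\vec s\in\vec S_{\ge\vec r}\setminus\{\overleftarrow r\}$ with $\vec s\ge\vec r$. $\vec s_0\in\vec S$ is linked to $\vec r$ if $\vec s_0\ge\vec r$ and $\vec s\vee\vec s_0\in\vec S$ for all $\vec s\in\vec S$ with $\vec s\ge\vec r$, $\vec s\neq\overleftarrow r$; it is $\mathcal F$-linked to $\vec r$ if moreover $f^{\vec r}_{\vec s_0}(\sigma)\in\mathcal F$ for every star $\sigma\in\mathcal F$ with $\sigma\subseteq\vec S_{\ge\vec r}\setminus\{\overleftarrow r\}$ having an element $\ge\vec r$. $\vec S$ is $\mathcal F$-separable if for all $\vec r,\vec r\,'\in\vec S$ with $\vec r\le\vec r\,'$ such that $\mathcal F$ forces neither $\vec r$ nor $\overleftarrow{r'}$, there is $s_0\in S$ with an orientation $\vec s_0$ that is $\mathcal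 F$-linked to $\vec r$ and such that $\overleftarrow s_0$ is $\mathcal F$-linked to $\overleftarrow{r'}$. *)

theory Defs
  imports Main
begin

text \<open>The universe of separations is the whole type 'a (a lattice, supplying the
  partial order, supremum and infimum), together with an order-reversing
  involution invol.\<close>

definition universe_invol :: "('a::lattice \<Rightarrow> 'a) \<Rightarrow> bool" where
  "universe_invol invol \<longleftrightarrow>
     (\<forall>x. invol (invol x) = x) \<and> (\<forall>x y. x \<le> y \<longrightarrow> invol y \<le> invol x)"

definition sep_system :: "('a::lattice \<Rightarrow> 'a) \<Rightarrow> 'a set \<Rightarrow> bool" where
  "sep_system invol Sv \<longleftrightarrow> (\<forall>x\<in>Sv. invol x \<in> Sv)"

definition sep_of :: "('a \<Rightarrow> 'a) \<Rightarrow> 'a \<Rightarrow> 'a set" where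
  "sep_of invol x = {x, invol x}"

definition degenerate :: "('a \<Rightarrow> 'a) \<Rightarrow> 'a \<Rightarrow> bool" where
  "degenerate invol x \<longleftrightarrow> x = invol x"

definition trivial_in :: "('a::lattice \<Rightarrow> 'a) \<Rightarrow> 'a set \<Rightarrow> 'a \<Rightarrow> bool" where
  "trivial_in invol Sv x \<longleftrightarrow> (\<exists>s\<in>Sv. x < s \<and> x < invol s)"

definition is_star :: "('a::lattice \<Rightarrow> 'a) \<Rightarrow> 'a set \<Rightarrow> 'a set \<Rightarrow> bool" where
  "is_star invol Sv \<sigma> \<longleftrightarrow> \<sigma> \<noteq> {} \<and> \<sigma> \<subseteq> Sv \<and>
     (\<forall>x\<in>\<sigma>. \<forall>y\<in>\<sigma>. x \<noteq> y \<longrightarrow> x \<le> invol y)"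

definition orientation :: "('a \<Rightarrow> 'a) \<Rightarrow> 'a set \<Rightarrow> 'a set \<Rightarrow> bool" where
  "orientation invol Sv Or \<longleftrightarrow> Or \<subseteq> Sv \<and>
     (\<forall>x\<in>Sv. x \<in> Or \<or> invol x \<in> Or) \<and>
     (\<forall>x\<in>Sv. x \<in> Or \<and> invol x \<in> Or \<longrightarrow> x = invol x)"

definition consistent :: "('a::lattice \<Rightarrow> 'a) \<Rightarrow> 'a set \<Rightarrow> 'a set \<Rightarrow> bool" where
  "consistent invol Sv Or \<longleftrightarrow>
     \<not> (\<exists>x\<in>Sv. \<exists>y\<in>Sv. sep_of invol x \<noteq> sep_of invol y \<and> x < y \<and>
          invol x \<in> Or \<and> y \<in> Or)"

definition avoids :: "'a set \<Rightarrow> 'a set set \<Rightarrow> bool" where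
  "avoids Or F \<longleftrightarrow> (\<forall>\<sigma>\<in>F. \<not> \<sigma> \<subseteq> Or)"

definition is_F_tangle :: "('a::lattice \<Rightarrow> 'a) \<Rightarrow> 'a set \<Rightarrow> 'a set set \<Rightarrow> 'a set \<Rightarrow> bool" where
  "is_F_tangle invol Sv F Or \<longleftrightarrow>
     orientation invol Sv Or \<and> consistent invol Sv Or \<and> avoids Or F"

definition forces :: "('a \<Rightarrow> 'a) \<Rightarrow> 'a set set \<Rightarrow> 'a \<Rightarrow> bool" where
  "forces invol F r \<longleftrightarrow> {invol r} \<in> F \<or> degenerate invol r"

definition standard :: "('a::lattice \<Rightarrow> 'a) \<Rightarrow> 'a set \<Rightarrow> 'a set set \<Rightarrow> bool" where
  "standard invol Sv F \<longleftrightarrow> (\<forall>r\<in>Sv. trivial_in invol Sv r \<longrightarrow> forces invol F r)"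

text \<open>Finite trees on natural-number vertices: E is a set of directed edges
  (both orientations of each undirected edge), the graph is connected, and
  it has no cycles (every edge is a bridge).\<close>
definition is_tree :: "nat set \<Rightarrow> (nat \<times> nat) set \<Rightarrow> bool" where
  "is_tree V E \<longleftrightarrow> finite V \<and> V \<noteq> {} \<and> E \<subseteq> V \<times> V \<and>
     (\<forall>u v. (u, v) \<in> E \<longrightarrow> (v, u) \<in> E \<and> u \<noteq> v) \<and>
     (\<forall>u\<in>V. \<forall>v\<in>V. (u, v) \<in> E\<^sup>*) \<and>
     (\<forall>u v. (u, v) \<in> E \<longrightarrow> (u, v) \<notin> (E - {(u, v), (v, u)})\<^sup>*)"

definition is_S_tree ::
  "('a \<Rightarrow> 'a) \<Rightarrow> 'a set \<Rightarrow> nat set \<Rightarrow> (nat \<times> nat) set \<Rightarrow> (nat \<times> nat \<Rightarrow> 'a) \<Rightarrow> bool" where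
  "is_S_tree invol Sv V E \<alpha> \<longleftrightarrow> is_tree V E \<and> E \<noteq> {} \<and>
     (\<forall>u v. (u, v) \<in> E \<longrightarrow> \<alpha> (u, v) \<in> Sv \<and> \<alpha> (v, u) = invol (\<alpha> (u, v)))"

definition S_tree_over ::
  "('a \<Rightarrow> 'a) \<Rightarrow> 'a set \<Rightarrow> 'a set set \<Rightarrow> nat set \<Rightarrow> (nat \<times> nat) set \<Rightarrow> (nat \<times> nat \<Rightarrow> 'a) \<Rightarrow> bool" where
  "S_tree_over invol Sv F V E \<alpha> \<longleftrightarrow> is_S_tree invol Sv V E \<alpha> \<and>
     (\<forall>t\<in>V. {\<alpha> (y, t) | y. (y, t) \<in> E} \<in> F)"

definition S_ge :: "('a::lattice \<Rightarrow> 'a) \<Rightarrow> 'a set \<Rightarrow> 'a \<Rightarrow> 'a set" where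
  "S_ge invol Sv r = {x\<in>Sv. r \<le> x \<or> r \<le> invol x}"

text \<open>The shifting map f^r_{s0}: f(s) = s \<squnion> s0 and f(invol s) = invol (s \<squnion> s0)
  for s \<ge> r, s \<noteq> invol r (only meaningful for nontrivial nondegenerate r).\<close>
definition shift :: "('a::lattice \<Rightarrow> 'a) \<Rightarrow> 'a \<Rightarrow> 'a \<Rightarrow> 'a \<Rightarrow> 'a" where
  "shift invol r s0 x =
     (if r \<le> x \<and> x \<noteq> invol r then sup x s0 else invol (sup (invol x) s0))"

definition linked :: "('a::lattice \<Rightarrow> 'a) \<Rightarrow> 'a set \<Rightarrow> 'a \<Rightarrow> 'a \<Rightarrow> bool" where
  "linked invol Sv r s0 \<longleftrightarrow> s0 \<in> Sv \<and> r \<le> s0 \<and>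
     (\<forall>s\<in>Sv. r \<le> s \<and> s \<noteq> invol r \<longrightarrow> sup s s0 \<in> Sv)"

definition F_linked :: "('a::lattice \<Rightarrow> 'a) \<Rightarrow> 'a set \<Rightarrow> 'a set set \<Rightarrow> 'a \<Rightarrow> 'a \<Rightarrow> bool" where
  "F_linked invol Sv F r s0 \<longleftrightarrow> linked invol Sv r s0 \<and>
     (\<forall>\<sigma>\<in>F. is_star invol Sv \<sigma> \<and> \<sigma> \<subseteq> S_ge invol Sv r - {invol r} \<and> (\<exists>x\<in>\<sigma>. r \<le> x)
        \<longrightarrow> shift invol r s0 ` \<sigma> \<in> F)"

definition F_separable :: "('a::lattice \<Rightarrow> 'a) \<Rightarrow> 'a set \<Rightarrow> 'a set set \<Rightarrow> bool" where
  "F_separable invol Sv F \<longleftrightarrow>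
     (\<forall>r\<in>Sv. \<forall>r'\<in>Sv. r \<le> r' \<and> \<not> forces invol F r \<and> \<not> forces invol F (invol r')
        \<longrightarrow> (\<exists>s0\<in>Sv. F_linked invol Sv F r s0 \<and> F_linked invol Sv F (invol r') (invol s0)))"

end

theory Submission
  imports Defs
begin

text \<open>
  The key notion is that of a branch: x roots an F-branch if some star of F contains x and
  the inverses of its other elements root F-branches again; F is buildable if some x and i x
  both root branches.  Unravelling and gluing branches shows that a buildable F yields an
  S-tree over F, and an S-tree excludes a tangle because a tangle would send every node of
  the tree to a neighbour, never turning back, which is impossible in a finite tree.

  If F is not buildable, we extend down-closed partial orientations P, forbidding the
  co-singletons of P, while keeping the augmented family non-buildable.  The extension lemma,
  derived from F-separability by shifting branches along linked separations and gluing them,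
  shows that one of two minimal candidate extensions is always possible; when P orients
  everything, P with the degenerate separations is an F-tangle.
\<close>

section \<open>Branches over a family of stars\<close>

text \<open>Unravelled, this is a finite tree all of
  whose nodes carry stars of G, hanging off a single dangling edge oriented x.\<close>

inductive branch :: "('a \<Rightarrow> 'a) \<Rightarrow> 'a set set \<Rightarrow> 'a \<Rightarrow> bool" for i G where
  branchI: "\<sigma> \<in> G \<Longrightarrow> x \<in> \<sigma> \<Longrightarrow> (\<forall>w\<in>\<sigma> - {x}. branch i G (i w)) \<Longrightarrow> branch i G x"

text \<open>Two branches rooted at x and at i x glue to a tree over G.\<close>

definition buildable :: "('a \<Rightarrow> 'a) \<Rightarrow> 'a set set \<Rightarrow> bool" where
  "buildable i G \<longleftrightarrow> (\<exists>x. branch i G x \<and> branch i G (i x))"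

definition branch_step :: "('a \<Rightarrow> 'a) \<Rightarrow> 'a set set \<Rightarrow> 'a set set \<Rightarrow> 'a \<Rightarrow> bool" where
  "branch_step i G H x \<longleftrightarrow> (\<exists>\<sigma>\<in>G. x \<in> \<sigma> \<and> (\<forall>w\<in>\<sigma> - {x}. branch i H (i w)))"

definition star_family :: "('a::order \<Rightarrow> 'a) \<Rightarrow> 'a set set \<Rightarrow> bool" where
  "star_family i G \<longleftrightarrow> (\<forall>\<sigma>\<in>G. \<forall>x\<in>\<sigma>. \<forall>w\<in>\<sigma>. x \<noteq> w \<longrightarrow> x \<le> i w)"

lemma branch_singleton: "{x} \<in> G \<Longrightarrow> branch i G x"
  by (rule branchI[of "{x}"]) auto

lemma branch_step_branch: "branch_step i G H x \<Longrightarrow> G \<subseteq> H \<Longrightarrow> branch i H x"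
  unfolding branch_step_def by (auto intro: branchI)

lemma branch_drop_singleton:
  assumes "branch i (insert {a} G) z" and "branch i G a"
  shows "branch i G z"
  using assms(1)
proof (induction rule: branch.induct)
  case (branchI \<sigma> x)
  then show ?case
    using assms(2) by (cases "\<sigma> = {a}") (auto intro: branch.branchI)
qed

text \<open>In a family of stars, a branch that needs the extra star {a} is rooted below a:
  following the path to {a} only moves downwards.\<close>

lemma branch_insert_singleton_below:
  assumes "branch i (insert {a} G) z" and "star_family i G"
  shows "branch i G z \<or> z \<le> a"
  using assms(1)
proof (induction rule: branch.induct)
  case (branchI \<sigma> x)
  show ?case
  proof (cases "\<sigma> = {a} \<or> (\<forall>w\<in>\<sigma> - {x}. branch i G (i w))")
    case True
    then show ?thesis using branchI by (auto intro: branch.branchI)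
  next
    case False
    then obtain w where w: "w \<in> \<sigma> - {x}" "\<not> branch i G (i w)" and "\<sigma> \<in> G"
      using branchI.hyps(1) by auto
    then have "x \<le> i w" using assms(2) branchI.hyps(2) unfolding star_family_def by auto
    also have "i w \<le> a" using branchI.IH w by auto
    finally show ?thesis ..
  qed
qed

text \<open>A branch over G extended by a star s either avoids s, or it passes through s; in the
  latter case, if also i x roots a branch, re-rooting at s shows that every y \<in> s has i y
  rooting a branch.\<close>

lemma branch_insert_cases:
  assumes "branch i (insert s G) x" and inv: "\<And>y. i (i y) = y"
  shows "branch i G x \<or> (branch i (insert s G) (i x) \<longrightarrow> (\<forall>y\<in>s. branch i (insert s G) (i y)))"
  using assms(1)
proof (induction rule: branch.induct)
  case (branchI \<sigma> x)
  show ?case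
  proof (cases "\<sigma> = s \<or> (\<forall>w\<in>\<sigma> - {x}. branch i G (i w))")
    case True
    then show ?thesis using branchI by (auto intro: branch.branchI)
  next
    case False
    then obtain w where w: "w \<in> \<sigma> - {x}" "\<not> branch i G (i w)" by auto
    have "branch i (insert s G) w" if "branch i (insert s G) (i x)"
      using branchI w(1) that by (intro branch.branchI[of \<sigma>]) auto
    then show ?thesis using branchI.IH w inv by metis
  qed
qed

text \<open>If adding the star {i r} makes a non-buildable family buildable, the new star is used,
  and re-rooting at it yields a branch at r.\<close>

lemma buildable_insert_singleton:
  assumes "\<not> buildable i G" and "buildable i (insert {i r} G)" and inv: "\<And>y. i (i y) = y"
  shows "branch i (insert {i r} G) r"
proof -
  obtain x where x: "branch i (insert {i r} G) x" "branch i (insert {i r} G) (i x)"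
    using assms(2) unfolding buildable_def by auto
  have "\<not> branch i G x \<or> \<not> branch i G (i x)"
    using assms(1) unfolding buildable_def by auto
  then show ?thesis
    using branch_insert_cases[OF x(1) inv] branch_insert_cases[OF x(2) inv] x inv by auto
qed

lemma buildable_glue:
  assumes fam: "star_family i G" and inv: "\<And>y. i (i y) = y"
    and up: "branch_step i G (insert {i a} G) a" and down: "branch_step i G (insert {a} G) (i a)"
  shows "buildable i G"
proof -
  obtain \<sigma>1 where \<sigma>1: "\<sigma>1 \<in> G" "a \<in> \<sigma>1" "\<forall>w\<in>\<sigma>1 - {a}. branch i (insert {i a} G) (i w)"
    using up unfolding branch_step_def by auto
  obtain \<sigma>2 where \<sigma>2: "\<sigma>2 \<in> G" "i a \<in> \<sigma>2" "\<forall>w\<in>\<sigma>2 - {i a}. branch i (insert {a} G) (i w)"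
    using down unfolding branch_step_def by auto
  have up': "branch i (insert {i a} G) a" and down': "branch i (insert {a} G) (i a)"
    using branch_step_branch[OF up] branch_step_branch[OF down] by auto
  show ?thesis
  proof (cases "\<forall>w\<in>\<sigma>1 - {a}. branch i G (i w)")
    case True
    then have "branch i G a" using \<sigma>1 by (intro branchI[of \<sigma>1]) auto
    with branch_drop_singleton[OF down'] show ?thesis unfolding buildable_def by auto
  next
    case False
    then obtain w1 where w1: "w1 \<in> \<sigma>1" "w1 \<noteq> a" "i w1 \<le> i a"
      using \<sigma>1(3) branch_insert_singleton_below[OF _ fam] by blast
    show ?thesis
    proof (cases "\<forall>w\<in>\<sigma>2 - {i a}. branch i G (i w)")
      case True
      then have "branch i G (i a)" using \<sigma>2 by (intro branchI[of \<sigma>2]) auto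
      with branch_drop_singleton[of i "i a" G a] up' inv show ?thesis
        unfolding buildable_def by metis
    next
      case False
      then obtain w2 where w2: "w2 \<in> \<sigma>2" "w2 \<noteq> i a" "i w2 \<le> a"
        using \<sigma>2(3) branch_insert_singleton_below[OF _ fam] by blast
      text \<open>Both branches need their extra star, so a \<le> i w1 \<le> i a \<le> i w2 \<le> a collapses.\<close>
      have "a \<le> i w1" "i a \<le> i w2"
        using fam \<sigma>1 \<sigma>2 w1 w2 unfolding star_family_def by auto
      then have "i w1 = i a" using w1(3) w2(3) by (metis order.trans order.antisym)
      then show ?thesis using w1(2) inv by metis
    qed
  qed
qed

section \<open>Finite trees\<close>

lemma rtrancl_map_steps:
  assumes "(a, b) \<in> R\<^sup>*" and "\<And>x y. (x, y) \<in> R \<Longrightarrow> (h x, h y) \<in> S\<^sup>*"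
  shows "(h a, h b) \<in> S\<^sup>*"
  using assms(1) by (induction rule: rtrancl_induct) (auto intro: rtrancl_trans assms(2))

lemma is_treeD:
  assumes "is_tree V E"
  shows "finite V" "V \<noteq> {}" "E \<subseteq> V \<times> V"
    and "\<And>u v. (u, v) \<in> E \<Longrightarrow> (v, u) \<in> E" "\<And>u v. (u, v) \<in> E \<Longrightarrow> u \<noteq> v"
    and "\<And>u v. u \<in> V \<Longrightarrow> v \<in> V \<Longrightarrow> (u, v) \<in> E\<^sup>*"
    and "\<And>u v. (u, v) \<in> E \<Longrightarrow> (u, v) \<notin> (E - {(u, v), (v, u)})\<^sup>*"
  using assms unfolding is_tree_def by auto

lemma is_treeI:
  assumes "finite V" "V \<noteq> {}" "E \<subseteq> V \<times> V"
    and "\<And>u v. (u, v) \<in> E \<Longrightarrow> (v, u) \<in> E \<and> u \<noteq> v"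
    and "\<And>u v. u \<in> V \<Longrightarrow> v \<in> V \<Longrightarrow> (u, v) \<in> E\<^sup>*"
    and "\<And>u v. (u, v) \<in> E \<Longrightarrow> (u, v) \<notin> (E - {(u, v), (v, u)})\<^sup>*"
  shows "is_tree V E"
  using assms unfolding is_tree_def by blast

lemma is_tree_image:
  assumes T: "is_tree V E" and inj: "inj_on f V"
  shows "is_tree (f ` V) ((\<lambda>(a, b). (f a, f b)) ` E)"
proof -
  let ?E = "(\<lambda>(a, b). (f a, f b)) ` E"
  note EV = is_treeD(3)[OF T] and sym = is_treeD(4,5)[OF T]
    and con = is_treeD(6)[OF T] and br = is_treeD(7)[OF T]
  define g where "g = inv_into V f"
  have gf: "\<And>x. x \<in> V \<Longrightarrow> g (f x) = x" using inj unfolding g_def by auto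
  have sym': "(v, u) \<in> ?E \<and> u \<noteq> v" if uv: "(u, v) \<in> ?E" for u v
  proof -
    obtain a b where ab: "(a, b) \<in> E" "u = f a" "v = f b" using uv by auto
    have "(b, a) \<in> E" "a \<noteq> b" using sym ab(1) by auto
    moreover have "a \<in> V" "b \<in> V" using EV ab(1) by auto
    ultimately have "(v, u) \<in> ?E" "f a \<noteq> f b"
      using ab inj unfolding inj_on_def by (force, blast)
    then show ?thesis using ab by auto
  qed
  have con': "(u, v) \<in> ?E\<^sup>*" if uv: "u \<in> f ` V" "v \<in> f ` V" for u v
  proof -
    obtain a b where ab: "a \<in> V" "b \<in> V" "u = f a" "v = f b" using uv by blast
    have "(f a, f b) \<in> ?E\<^sup>*"
      by (rule rtrancl_map_steps[OF con[OF ab(1,2)]]) (auto intro!: r_into_rtrancl)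
    then show ?thesis using ab by simp
  qed
  text \<open>A detour around an edge in the image pulls back along g to a detour in E.\<close>
  have br': "(u, v) \<notin> (?E - {(u, v), (v, u)})\<^sup>*" if uv: "(u, v) \<in> ?E" for u v
  proof
    assume path: "(u, v) \<in> (?E - {(u, v), (v, u)})\<^sup>*"
    obtain a b where ab: "(a, b) \<in> E" "u = f a" "v = f b" using uv by auto
    have "(g u, g v) \<in> (E - {(a, b), (b, a)})\<^sup>*"
    proof (rule rtrancl_map_steps[OF path])
      fix x y assume xy: "(x, y) \<in> ?E - {(u, v), (v, u)}"
      then obtain c d where cd: "(c, d) \<in> E" "x = f c" "y = f d" by auto
      then have "c \<in> V" "d \<in> V" using EV by auto
      then show "(g x, g y) \<in> (E - {(a, b), (b, a)})\<^sup>*" using xy cd ab gf by auto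
    qed
    then show False using br[OF ab(1)] ab gf EV by auto
  qed
  show ?thesis
    using is_treeD(1,2)[OF T] EV by (intro is_treeI sym' con' br') auto
qed

lemma join_keeps_bridge:
  assumes T1: "is_tree V1 E1" and E2: "E2 \<subseteq> V2 \<times> V2" and disj: "V1 \<inter> V2 = {}"
    and uv: "u \<in> V1" "v \<in> V2" and ab: "(a, b) \<in> E1"
  shows "(a, b) \<notin> (E1 \<union> E2 \<union> {(u, v), (v, u)} - {(a, b), (b, a)})\<^sup>*"
proof
  let ?E = "E1 \<union> E2 \<union> {(u, v), (v, u)}"
  note E1 = is_treeD(3)[OF T1]
  text \<open>Retract the second tree onto u; this maps a detour in the join to a detour in E1.\<close>
  define h where "h x = (if x \<in> V1 then x else u)" for x
  assume "(a, b) \<in> (?E - {(a, b), (b, a)})\<^sup>*"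
  then have "(h a, h b) \<in> (E1 - {(a, b), (b, a)})\<^sup>*"
  proof (rule rtrancl_map_steps)
    fix x y assume xy: "(x, y) \<in> ?E - {(a, b), (b, a)}"
    show "(h x, h y) \<in> (E1 - {(a, b), (b, a)})\<^sup>*"
    proof (cases "(x, y) \<in> E1")
      case True
      then show ?thesis using xy E1 unfolding h_def by auto
    next
      case False
      then have "h x = u \<and> h y = u" using xy E2 disj uv unfolding h_def by auto
      then show ?thesis by auto
    qed
  qed
  moreover have "h a = a" "h b = b" using ab E1 unfolding h_def by auto
  ultimately show False using is_treeD(7)[OF T1 ab] by simp
qed

lemma join_new_bridge:
  assumes E: "E1 \<subseteq> V1 \<times> V1" "E2 \<subseteq> V2 \<times> V2" and disj: "V1 \<inter> V2 = {}" and uv: "u \<in> V1" "v \<in> V2"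
  shows "(u, v) \<notin> (E1 \<union> E2 \<union> {(u, v), (v, u)} - {(u, v), (v, u)})\<^sup>*"
proof
  assume "(u, v) \<in> (E1 \<union> E2 \<union> {(u, v), (v, u)} - {(u, v), (v, u)})\<^sup>*"
  then have "(u, v) \<in> (E1 \<union> E2)\<^sup>*" by (rule rtrancl_mono[THEN subsetD, rotated]) auto
  moreover have "(E1 \<union> E2) `` V1 \<subseteq> V1" using E disj by auto
  ultimately have "v \<in> V1" using Image_closed_trancl uv(1) by blast
  then show False using uv(2) disj by auto
qed

lemma join_connected:
  assumes T1: "is_tree V1 E1" and T2: "is_tree V2 E2" and uv: "u \<in> V1" "v \<in> V2"
    and x: "x \<in> V1 \<union> V2"
  shows "(x, u) \<in> (E1 \<union> E2 \<union> {(u, v), (v, u)})\<^sup>* \<and> (u, x) \<in> (E1 \<union> E2 \<union> {(u, v), (v, u)})\<^sup>*"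
proof -
  let ?E = "E1 \<union> E2 \<union> {(u, v), (v, u)}"
  have sub: "E1\<^sup>* \<subseteq> ?E\<^sup>*" "E2\<^sup>* \<subseteq> ?E\<^sup>*" "(u, v) \<in> ?E\<^sup>*" "(v, u) \<in> ?E\<^sup>*"
    by (rule rtrancl_mono, blast)+ auto
  show ?thesis
  proof (cases "x \<in> V1")
    case True
    then show ?thesis using is_treeD(6)[OF T1] uv sub(1) by blast
  next
    case False
    then have "x \<in> V2" using x by auto
    then have "(x, v) \<in> ?E\<^sup>* \<and> (v, x) \<in> ?E\<^sup>*" using is_treeD(6)[OF T2] uv sub(2) by blast
    then show ?thesis using sub(3,4) by (meson rtrancl_trans)
  qed
qed

lemma is_tree_join:
  assumes T1: "is_tree V1 E1" and T2: "is_tree V2 E2" and disj: "V1 \<inter> V2 = {}"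
    and uv: "u \<in> V1" "v \<in> V2"
  shows "is_tree (V1 \<union> V2) (E1 \<union> E2 \<union> {(u, v), (v, u)})"
proof -
  let ?E = "E1 \<union> E2 \<union> {(u, v), (v, u)}"
  note E = is_treeD(3)[OF T1] is_treeD(3)[OF T2]
  have swap: "?E = E2 \<union> E1 \<union> {(v, u), (u, v)}" by auto
  have connected: "(a, b) \<in> ?E\<^sup>*" if "a \<in> V1 \<union> V2" "b \<in> V1 \<union> V2" for a b
    using join_connected[OF T1 T2 uv] that by (meson rtrancl_trans)
  have disj': "V2 \<inter> V1 = {}" using disj by auto
  have bridges: "(a, b) \<notin> (?E - {(a, b), (b, a)})\<^sup>*" if ab: "(a, b) \<in> ?E" for a b
  proof -
    consider "(a, b) \<in> E1" | "(a, b) \<in> E2" | "(a, b) = (u, v)" | "(a, b) = (v, u)" using ab by auto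
    then show ?thesis
    proof cases
      case 1
      then show ?thesis using join_keeps_bridge[OF T1 E(2) disj uv] by blast
    next
      case 2
      then show ?thesis using join_keeps_bridge[OF T2 E(1) disj' uv(2,1)] unfolding swap by blast
    next
      case 3
      then show ?thesis using join_new_bridge[OF E disj uv] by simp
    next
      case 4
      then show ?thesis using join_new_bridge[OF E(2,1) disj' uv(2,1)] unfolding swap by simp
    qed
  qed
  have symmetric: "(b, a) \<in> ?E \<and> a \<noteq> b" if "(a, b) \<in> ?E" for a b
    using that is_treeD(4,5)[OF T1] is_treeD(4,5)[OF T2] uv disj by blast
  show ?thesis
    using is_treeD(1)[OF T1] is_treeD(1)[OF T2] E uv
    by (intro is_treeI symmetric connected bridges) auto
qed

definition node_star :: "(nat \<times> nat) set \<Rightarrow> (nat \<times> nat \<Rightarrow> 'a) \<Rightarrow> nat \<Rightarrow> 'a set" where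
  "node_star E \<alpha> t = {\<alpha> (y, t) | y. (y, t) \<in> E}"

lemma node_star_cong: "(\<And>e. e \<in> E \<Longrightarrow> \<alpha> e = \<beta> e) \<Longrightarrow> node_star E \<alpha> t = node_star E \<beta> t"
  unfolding node_star_def by force

lemma node_star_join:
  assumes "E1 \<subseteq> V1 \<times> V1" "E2 \<subseteq> V2 \<times> V2" "V1 \<inter> V2 = {}" "u \<in> V1" "v \<in> V2" "t \<in> V1"
  shows "node_star (E1 \<union> E2 \<union> {(u, v), (v, u)}) \<alpha> t
    = node_star E1 \<alpha> t \<union> (if t = u then {\<alpha> (v, u)} else {})"
  using assms unfolding node_star_def by auto

subsection \<open>Trees exclude tangles\<close>

lemma first_repeat:
  fixes s :: "nat \<Rightarrow> 'a"
  assumes "finite V" and "\<And>k. s k \<in> V"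
  obtains a j where "a < j" "s a = s j" "inj_on s {..<j}"
proof -
  have "\<not> inj_on s {..card V}"
  proof
    assume "inj_on s {..card V}"
    then have "card (s ` {..card V}) = Suc (card V)" by (simp add: card_image)
    moreover have "card (s ` {..card V}) \<le> card V" using assms by (intro card_mono) auto
    ultimately show False by simp
  qed
  then have ex: "\<exists>j. \<exists>a<j. s a = s j" unfolding inj_on_def by (metis linorder_neqE_nat)
  define j where "j = (LEAST j. \<exists>a<j. s a = s j)"
  obtain a where "a < j" "s a = s j" using LeastI_ex[OF ex] unfolding j_def by blast
  moreover have "inj_on s {..<j}"
  proof (rule inj_onI, rule ccontr)
    fix b c assume bc: "b \<in> {..<j}" "c \<in> {..<j}" "s b = s c" "b \<noteq> c"
    have "\<exists>a<max b c. s a = s (max b c)"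
    proof (cases "b < c")
      case True
      then show ?thesis using bc(3) by (auto simp: max_def)
    next
      case False
      then have "c < b" using bc(4) by auto
      then show ?thesis using bc(3) by (auto simp: max_def)
    qed
    then have "j \<le> max b c" unfolding j_def by (rule Least_le)
    then show False using bc by auto
  qed
  ultimately show ?thesis using that by blast
qed

text \<open>A closed walk of length greater than two without repeated vertices would give a detour
  around its first edge.\<close>

lemma tree_no_long_cycle:
  assumes T: "is_tree V E" and walk: "\<And>k. k < j \<Longrightarrow> (s k, s (Suc k)) \<in> E"
    and closed: "s j = s 0" and long: "2 < j" and distinct: "inj_on s {..<j}"
  shows False
proof -
  let ?R = "E - {(s 1, s 0), (s 0, s 1)}"
  have path: "(s 1, s k) \<in> ?R\<^sup>*" if "1 \<le> k" "k \<le> j" for k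
    using that
  proof (induction k)
    case 0
    then show ?case by simp
  next
    case (Suc k)
    show ?case
    proof (cases "k = 0")
      case True
      then show ?thesis by simp
    next
      case False
      have "s k \<noteq> s 0" using inj_on_eq_iff[OF distinct, of k 0] False Suc.prems by auto
      moreover have "s (Suc k) \<noteq> s 0" if "s k = s 1"
      proof -
        have "k = 1" using inj_on_eq_iff[OF distinct, of k 1] that Suc.prems long by auto
        then show ?thesis using inj_on_eq_iff[OF distinct, of 2 0] long by (simp add: numeral_2_eq_2)
      qed
      ultimately have "(s k, s (Suc k)) \<in> ?R" using walk Suc.prems by auto
      then show ?thesis using Suc False by (auto intro: rtrancl_into_rtrancl)
    qed
  qed
  have "(s 1, s 0) \<in> E" using walk[of 0] long is_treeD(4)[OF T] by auto
  then show False using is_treeD(7)[OF T] path[of j] closed long by auto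
qed

lemma tree_no_nonbacktracking_walk:
  assumes T: "is_tree V E" and step: "\<And>t. t \<in> V \<Longrightarrow> (t, nx t) \<in> E"
    and no_back: "\<And>t. t \<in> V \<Longrightarrow> nx (nx t) \<noteq> t"
  shows False
proof -
  obtain t0 where t0: "t0 \<in> V" using is_treeD(2)[OF T] by auto
  define s where "s k = (nx ^^ k) t0" for k
  have nx_V: "nx t \<in> V" if "t \<in> V" for t using step[OF that] is_treeD(3)[OF T] by auto
  have s_V: "s k \<in> V" for k by (induction k) (auto simp: s_def t0 nx_V)
  have s_Suc: "s (Suc k) = nx (s k)" for k by (simp add: s_def)
  obtain a j where aj: "a < j" "s a = s j" "inj_on s {..<j}"
    by (rule first_repeat[OF is_treeD(1)[OF T] s_V])
  have "j \<noteq> Suc a"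
  proof
    assume "j = Suc a"
    then have "nx (s a) = s a" using aj(2) s_Suc by simp
    then have "(s a, s a) \<in> E" using step[OF s_V[of a]] by simp
    then show False using is_treeD(5)[OF T] by blast
  qed
  moreover have "j \<noteq> Suc (Suc a)"
  proof
    assume "j = Suc (Suc a)"
    then have "nx (nx (s a)) = s a" using aj(2) s_Suc by simp
    then show False using no_back[OF s_V] by blast
  qed
  ultimately have long: "2 < j - a" using aj(1) by auto
  show False
  proof (rule tree_no_long_cycle[OF T, of "j - a" "\<lambda>k. s (a + k)"])
    show "(s (a + k), s (a + Suc k)) \<in> E" for k
      using step[OF s_V[of "a + k"]] s_Suc[of "a + k"] by simp
    show "s (a + (j - a)) = s (a + 0)" using aj(1,2) by simp
    show "inj_on (\<lambda>k. s (a + k)) {..<j - a}"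
    proof (rule inj_onI)
      fix x y assume "x \<in> {..<j - a}" "y \<in> {..<j - a}" "s (a + x) = s (a + y)"
      then show "x = y" using inj_on_eq_iff[OF aj(3), of "a + x" "a + y"] by auto
    qed
  qed (rule long)
qed

text \<open>An S-tree over F and an F-tangle exclude each other: at every node the tangle does not
  contain the whole star, so following a non-tangle edge inwards never turns back.\<close>

lemma S_tree_tangle_exclusive:
  assumes tree: "S_tree_over i Sv F V E \<alpha>" and tangle: "is_F_tangle i Sv F Or"
  shows False
proof -
  have T: "is_tree V E"
    and label: "\<And>u v. (u, v) \<in> E \<Longrightarrow> \<alpha> (u, v) \<in> Sv \<and> \<alpha> (v, u) = i (\<alpha> (u, v))"
    and stars: "\<And>t. t \<in> V \<Longrightarrow> {\<alpha> (y, t) | y. (y, t) \<in> E} \<in> F"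
    using tree unfolding S_tree_over_def is_S_tree_def by auto
  have oriented: "\<And>x. x \<in> Sv \<Longrightarrow> x \<in> Or \<or> i x \<in> Or" and avoid: "\<forall>\<sigma>\<in>F. \<not> \<sigma> \<subseteq> Or"
    using tangle unfolding is_F_tangle_def orientation_def avoids_def by auto
  have "\<forall>t\<in>V. \<exists>y. (y, t) \<in> E \<and> \<alpha> (y, t) \<notin> Or"
  proof
    fix t assume "t \<in> V"
    then have "\<not> {\<alpha> (y, t) | y. (y, t) \<in> E} \<subseteq> Or" using avoid stars by blast
    then show "\<exists>y. (y, t) \<in> E \<and> \<alpha> (y, t) \<notin> Or" by blast
  qed
  then obtain nx where nx: "\<forall>t\<in>V. (nx t, t) \<in> E \<and> \<alpha> (nx t, t) \<notin> Or"
    by (auto dest: bchoice)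
  have out: "(t, nx t) \<in> E" "\<alpha> (t, nx t) \<in> Or" if "t \<in> V" for t
    using nx that label[of "nx t" t] oriented is_treeD(4)[OF T] by auto
  have no_back: "nx (nx t) \<noteq> t" if t: "t \<in> V" for t
  proof
    assume returns: "nx (nx t) = t"
    have "nx t \<in> V" using out(1)[OF t] is_treeD(3)[OF T] by auto
    then have "\<alpha> (nx (nx t), nx t) \<notin> Or" using nx by blast
    then show False using out(2)[OF t] returns by simp
  qed
  show False by (rule tree_no_nonbacktracking_walk[OF T out(1) no_back])
qed

section \<open>The setting of the duality theorem\<close>

locale tree_duality =
  fixes i :: "'a::lattice \<Rightarrow> 'a" and Sv :: "'a set" and F :: "'a set set"
  assumes universe: "universe_invol i" and system: "sep_system i Sv" and finite_S: "finite Sv"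
    and F_sub: "F \<subseteq> Pow Sv" and F_stars: "\<forall>\<sigma>\<in>F. is_star i Sv \<sigma>"
    and F_standard: "standard i Sv F" and F_separable: "F_separable i Sv F"
begin

lemma invol_invol [simp]: "i (i x) = x"
  using universe unfolding universe_invol_def by auto

lemma invol_eq_iff [simp]: "i x = i y \<longleftrightarrow> x = y"
  by (metis invol_invol)

lemma invol_antimono: "x \<le> y \<Longrightarrow> i y \<le> i x"
  using universe unfolding universe_invol_def by auto

lemma invol_closed: "x \<in> Sv \<Longrightarrow> i x \<in> Sv"
  using system unfolding sep_system_def by auto

lemma F_star_le: "\<sigma> \<in> F \<Longrightarrow> x \<in> \<sigma> \<Longrightarrow> w \<in> \<sigma> \<Longrightarrow> x \<noteq> w \<Longrightarrow> x \<le> i w"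
  using F_stars unfolding is_star_def by auto

lemma unforced_nontrivial:
  "x \<in> Sv \<Longrightarrow> \<not> forces i F x \<Longrightarrow> x \<noteq> i x \<and> \<not> trivial_in i Sv x"
  using F_standard unfolding standard_def forces_def degenerate_def by auto

lemma nontrivial_le_both:
  assumes "\<not> trivial_in i Sv r" "w \<in> Sv" "r \<le> w" "r \<le> i w"
  shows "w = r \<or> w = i r"
  using assms unfolding trivial_in_def by (metis invol_invol order.not_eq_order_implies_strict)

subsection \<open>Down-closed partial orientations and the tangle side\<close>

text \<open>A down-closed set P of nondegenerate separations is treated as partially oriented by
  forbidding the co-singletons {i p}; augmented P is the resulting family of stars.\<close>

definition nondeg :: "'a set" where
  "nondeg = {x\<in>Sv. x \<noteq> i x}"

definition augmented :: "'a set \<Rightarrow> 'a set set" where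
  "augmented P = F \<union> (\<lambda>p. {i p}) ` P"

definition down_closed :: "'a set \<Rightarrow> bool" where
  "down_closed P \<longleftrightarrow> P \<subseteq> nondeg \<and> (\<forall>p\<in>P. \<forall>q\<in>nondeg. q \<le> p \<longrightarrow> q \<in> P)"

lemma augmented_star_family: "star_family i (augmented P)"
  unfolding star_family_def augmented_def using F_star_le by auto

lemma augmented_insert: "augmented (insert m P) = insert {i m} (augmented P)"
  unfolding augmented_def by auto

lemma branch_augmented_inv: "p \<in> P \<Longrightarrow> branch i (augmented P) (i p)"
  unfolding augmented_def by (auto intro: branch_singleton)

lemma not_buildable_branch:
  "\<not> buildable i G \<Longrightarrow> branch i G x \<Longrightarrow> \<not> branch i G (i x)"
  unfolding buildable_def by auto

text \<open>If the augmented family is not buildable, it contains {y} for every separation y above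
  some i p with p \<in> P.  If y were degenerate, i p would be trivial, hence forced by F, and
  {p} together with {i p} would build a tree.\<close>

lemma down_closed_absorbs:
  assumes P: "down_closed P" and nb: "\<not> buildable i (augmented P)"
    and p: "p \<in> P" and y: "y \<in> Sv" "i p \<le> y"
  shows "{y} \<in> augmented P"
proof -
  have pS: "p \<in> Sv" and p_nd: "p \<noteq> i p" using P p unfolding down_closed_def nondeg_def by auto
  show ?thesis
  proof (cases "y = i y")
    case False
    have "i y \<le> p" using invol_antimono[OF y(2)] by simp
    moreover have "i y \<in> nondeg" using False invol_closed[OF y(1)] unfolding nondeg_def by auto
    ultimately have "i y \<in> P" using P p unfolding down_closed_def by blast
    then show ?thesis unfolding augmented_def by (metis UnI2 image_eqI invol_invol)
  next
    case True
    have "i p \<noteq> y" using p_nd True by (metis invol_invol)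
    then have "i p < y" "i p < i y" using y(2) True by auto
    then have "trivial_in i Sv (i p)" using y(1) unfolding trivial_in_def by auto
    then have "forces i F (i p)" using F_standard invol_closed[OF pS] unfolding standard_def by blast
    then have "{p} \<in> F" using p_nd unfolding forces_def degenerate_def by auto
    then have "branch i (augmented P) p" unfolding augmented_def by (auto intro: branch_singleton)
    then show ?thesis using nb branch_augmented_inv[OF p] not_buildable_branch by blast
  qed
qed

text \<open>The shifting map on the other elements w of a star containing some x \<ge> r: since r is
  nontrivial, such w are not above r unless w = r.\<close>

lemma shift_other:
  assumes r: "\<not> trivial_in i Sv r" "r \<noteq> i r" "r \<le> s0"
    and w: "w \<in> Sv" "r \<le> i w" "w \<noteq> i r"
  shows "shift i r s0 w = (if w = r then s0 else i (sup (i w) s0))"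
  using nontrivial_le_both[OF r(1) w(1) _ w(2)] r w(3) unfolding shift_def
  by (auto simp: sup_absorb2)

lemma shifted_star:
  assumes linked: "F_linked i Sv F r s0"
    and \<sigma>: "\<sigma> \<in> F" "x \<in> \<sigma>" "r \<le> x" "x \<noteq> i r" "i r \<notin> \<sigma>"
  shows "shift i r s0 ` \<sigma> \<in> F" "sup x s0 \<in> shift i r s0 ` \<sigma>"
proof -
  have "\<sigma> \<subseteq> S_ge i Sv r - {i r}"
  proof
    fix w assume w: "w \<in> \<sigma>"
    have "r \<le> w \<or> r \<le> i w"
      using F_star_le[OF \<sigma>(1,2) w] \<sigma>(3) by (cases "w = x") (auto intro: order_trans)
    then show "w \<in> S_ge i Sv r - {i r}"
      using w \<sigma>(1,5) F_sub unfolding S_ge_def by auto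
  qed
  then show "shift i r s0 ` \<sigma> \<in> F"
    using linked \<sigma> F_stars unfolding F_linked_def by blast
  have "shift i r s0 x = sup x s0" using \<sigma>(3,4) unfolding shift_def by auto
  then show "sup x s0 \<in> shift i r s0 ` \<sigma>" using \<sigma>(2) by force
qed

lemma branch_shift:
  assumes P: "down_closed P" and nb: "\<not> buildable i (augmented P)"
    and r: "r \<in> Sv" "\<not> forces i F r" and linked: "F_linked i Sv F r s0"
  shows "branch i (insert {i r} (augmented P)) x \<Longrightarrow> r \<le> x \<Longrightarrow> x \<noteq> i r
     \<Longrightarrow> branch_step i (augmented P) (insert {i s0} (augmented P)) (sup x s0)"
proof (induction rule: branch.induct)
  case (branchI \<sigma> x)
  let ?G = "augmented P" and ?H = "insert {i s0} (augmented P)"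
  have r_nd: "r \<noteq> i r" and r_nt: "\<not> trivial_in i Sv r" using unforced_nontrivial[OF r] by auto
  have rs0: "r \<le> s0" and linked_sup: "\<And>s. s \<in> Sv \<Longrightarrow> r \<le> s \<Longrightarrow> s \<noteq> i r \<Longrightarrow> sup s s0 \<in> Sv"
    using linked unfolding F_linked_def linked_def by auto
  have \<sigma>G: "\<sigma> \<in> ?G" using branchI by auto
  have \<sigma>S: "\<sigma> \<subseteq> Sv"
    using \<sigma>G F_sub P invol_closed unfolding augmented_def down_closed_def nondeg_def by auto
  have below: "x \<le> i w" if "w \<in> \<sigma> - {x}" for w
    using augmented_star_family \<sigma>G branchI.hyps(2) that unfolding star_family_def by auto
  show ?case
  proof (cases "i r \<in> \<sigma>")
    case True
    text \<open>Then x lies below r, so x = r and the claim is the induction hypothesis at i r.\<close>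
    have "i r \<noteq> x" using branchI by auto
    then have "x = r" using below[of "i r"] True branchI.prems(1) by auto
    have "i r \<in> \<sigma> - {x}" using True \<open>i r \<noteq> x\<close> by auto
    then show ?thesis using branchI.IH[rule_format, of "i r"] \<open>x = r\<close> r_nd by auto
  next
    case False
    have children: "branch i ?H (i (shift i r s0 w))" if w: "w \<in> \<sigma> - {x}" for w
    proof -
      have "r \<le> i w" "w \<noteq> i r" using below[OF w] branchI.prems(1) \<open>i r \<notin> \<sigma>\<close> w by auto
      then have shift_w: "shift i r s0 w = (if w = r then s0 else i (sup (i w) s0))"
        using shift_other[OF r_nt r_nd rs0] \<sigma>S w by auto
      show ?thesis
      proof (cases "w = r")
        case True
        then show ?thesis using shift_w by (auto intro: branch_singleton)
      next
        case False
        then have "branch_step i ?G ?H (sup (i w) s0)"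
          using branchI.IH[rule_format, OF w] \<open>r \<le> i w\<close> \<open>w \<noteq> i r\<close> by auto
        then show ?thesis using shift_w False branch_step_branch[of i ?G ?H] by auto
      qed
    qed
    show ?thesis
    proof (cases "\<sigma> \<in> F")
      case True
      note shifted = shifted_star[OF linked True branchI.hyps(2) branchI.prems False]
      have "shift i r s0 x = sup x s0" using branchI.prems unfolding shift_def by auto
      then have "\<forall>v\<in>shift i r s0 ` \<sigma> - {sup x s0}. branch i ?H (i v)"
        using children by auto
      then show ?thesis using shifted unfolding branch_step_def augmented_def by blast
    next
      case notF: False
      text \<open>Then \<sigma> = {i p} for some p in P, and the shifted singleton is absorbed by P.\<close>
      then obtain p where p: "p \<in> P" "\<sigma> = {i p}" using \<sigma>G unfolding augmented_def by auto
      have "sup x s0 \<in> Sv" using linked_sup \<sigma>S branchI.hyps(2) branchI.prems by auto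
      then have "{sup x s0} \<in> ?G"
        using down_closed_absorbs[OF P nb p(1)] p(2) branchI.hyps(2) by auto
      then show ?thesis unfolding branch_step_def by auto
    qed
  qed
qed

text \<open>Otherwise shift both branches to
  a separation s0 provided by F-separability and glue them.\<close>

lemma extension_lemma:
  assumes P: "down_closed P" and nb: "\<not> buildable i (augmented P)"
    and rr': "r \<in> Sv" "r' \<in> Sv" "r \<le> r'" and unforced: "\<not> forces i F r" "\<not> forces i F (i r')"
    and b1: "buildable i (insert {i r} (augmented P))"
    and b2: "buildable i (insert {r'} (augmented P))"
  shows False
proof -
  let ?G = "augmented P"
  obtain s0 where s0: "F_linked i Sv F r s0" "F_linked i Sv F (i r') (i s0)"
    using F_separable rr' unforced unfolding F_separable_def by blast
  have "r \<le> s0" "i r' \<le> i s0" using s0 unfolding F_linked_def linked_def by auto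
  have nd: "r \<noteq> i r" "i r' \<noteq> r'"
    using unforced_nontrivial[OF rr'(1) unforced(1)] unforced_nontrivial[OF _ unforced(2)]
      invol_closed[OF rr'(2)] by auto
  have "branch i (insert {i r} ?G) r" by (rule buildable_insert_singleton[OF nb b1 invol_invol])
  from branch_shift[OF P nb rr'(1) unforced(1) s0(1) this order_refl nd(1)]
  have up: "branch_step i ?G (insert {i s0} ?G) s0" using \<open>r \<le> s0\<close> by (simp add: sup_absorb2)
  have "branch i (insert {i (i r')} ?G) (i r')"
    using buildable_insert_singleton[OF nb _ invol_invol, of "i r'"] b2 by simp
  from branch_shift[OF P nb invol_closed[OF rr'(2)] unforced(2) s0(2) this order_refl] nd(2)
  have down: "branch_step i ?G (insert {s0} ?G) (i s0)" using \<open>i r' \<le> i s0\<close> by (simp add: sup_absorb2)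
  show False using buildable_glue[OF augmented_star_family invol_invol up down] nb by blast
qed

lemma down_closed_no_inverse:
  assumes "\<not> buildable i (augmented P)" "p \<in> P"
  shows "i p \<notin> P"
  using assms branch_augmented_inv not_buildable_branch by (metis invol_invol)

lemma star_degenerate_unique:
  assumes "\<sigma> \<in> F" "d \<in> \<sigma>" "d = i d" "w \<in> \<sigma>" "w = i w"
  shows "w = d"
  using F_star_le[OF assms(1,2,4)] F_star_le[OF assms(1,4,2)] assms(3,5) by (metis order.antisym)

lemma full_orientation:
  assumes P: "down_closed P" and nb: "\<not> buildable i (augmented P)"
    and total: "\<forall>s\<in>nondeg. s \<in> P \<or> i s \<in> P"
  shows "orientation i Sv (P \<union> {x\<in>Sv. x = i x})"
  using P total down_closed_no_inverse[OF nb]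
  unfolding orientation_def down_closed_def nondeg_def by (auto simp: invol_closed)

lemma down_closed_consistent:
  assumes P: "down_closed P" and nb: "\<not> buildable i (augmented P)"
  shows "consistent i Sv (P \<union> {x\<in>Sv. x = i x})"
  unfolding consistent_def
proof (intro notI, elim bexE conjE)
  fix x y assume xy: "x \<in> Sv" "y \<in> Sv" "x < y"
    and in_O: "i x \<in> P \<union> {x\<in>Sv. x = i x}" "y \<in> P \<union> {x\<in>Sv. x = i x}"
  have iyx: "i y < i x" using invol_antimono[of x y] xy(3) by (metis invol_invol order_less_le)
  have below_P: "q \<in> P" if "q \<in> Sv" "q \<noteq> i q" "q \<le> p" "p \<in> P" for p q
    using P that unfolding down_closed_def nondeg_def by auto
  show False
  proof (cases "y \<in> P")
    case True
    text \<open>Down-closure puts both x and i x, or both y and i y, into P.\<close>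
    show False
    proof (cases "x = i x")
      case True
      then have "i y < y" using iyx xy(3) by auto
      then have "i y \<in> P" using below_P[OF invol_closed[OF xy(2)] _ _ \<open>y \<in> P\<close>] by auto
      then show False using down_closed_no_inverse[OF nb \<open>y \<in> P\<close>] by auto
    next
      case False
      then have "x \<in> P" "i x \<in> P" using below_P[OF xy(1) _ _ \<open>y \<in> P\<close>] xy(3) in_O(1) by auto
      then show False using down_closed_no_inverse[OF nb] by blast
    qed
  next
    case False
    text \<open>Then y is degenerate, so x < y is trivial and hence forced, contradicting i x \<in> P.\<close>
    then have "y = i y" using in_O(2) by auto
    then have "x \<noteq> i x" "trivial_in i Sv x" using iyx xy unfolding trivial_in_def by auto
    then have "{i x} \<in> F" using F_standard xy(1) unfolding standard_def forces_def degenerate_def by auto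
    then have "branch i (augmented P) (i x)" unfolding augmented_def by (auto intro: branch_singleton)
    moreover have "i x \<in> P" using in_O(1) \<open>x \<noteq> i x\<close> by auto
    ultimately show False using branch_augmented_inv nb not_buildable_branch by (metis invol_invol)
  qed
qed

lemma down_closed_avoids:
  assumes nb: "\<not> buildable i (augmented P)"
  shows "avoids (P \<union> {x\<in>Sv. x = i x}) F"
  unfolding avoids_def
proof (intro ballI notI)
  fix \<sigma> assume \<sigma>: "\<sigma> \<in> F" and sub: "\<sigma> \<subseteq> P \<union> {x\<in>Sv. x = i x}"
  text \<open>Pick x in \<sigma>, the degenerate element of \<sigma> if there is one; all others then lie in P.\<close>
  obtain x where x: "x \<in> \<sigma>" and x_deg: "\<forall>d\<in>\<sigma>. d = i d \<longrightarrow> d = x"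
  proof (cases "\<exists>d\<in>\<sigma>. d = i d")
    case True
    then obtain d where "d \<in> \<sigma>" "d = i d" by blast
    then show ?thesis using that star_degenerate_unique[OF \<sigma>] by blast
  next
    case False
    moreover obtain x where "x \<in> \<sigma>" using F_stars \<sigma> unfolding is_star_def by blast
    ultimately show ?thesis using that by blast
  qed
  have others: "\<forall>w\<in>\<sigma> - {x}. branch i (augmented P) (i w)"
    using sub x_deg branch_augmented_inv by blast
  have "branch i (augmented P) x"
    using \<sigma> x others unfolding augmented_def by (intro branchI[of \<sigma>]) auto
  moreover have "branch i (augmented P) (i x)"
    using x sub branch_augmented_inv \<open>branch i (augmented P) x\<close> by auto
  ultimately show False using nb not_buildable_branch by blast
qed

definition unoriented :: "'a set \<Rightarrow> 'a set" where
  "unoriented P = {x\<in>nondeg. x \<notin> P \<and> i x \<notin> P}"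

lemma down_closed_insert_minimal:
  assumes P: "down_closed P" and m: "m \<in> unoriented P"
    and minimal: "\<forall>b\<in>unoriented P. b \<le> m \<longrightarrow> m = b"
  shows "down_closed (insert m P)"
  unfolding down_closed_def
proof (intro conjI ballI impI)
  show "insert m P \<subseteq> nondeg" using P m unfolding down_closed_def unoriented_def by auto
  fix p q assume p: "p \<in> insert m P" and q: "q \<in> nondeg" "q \<le> p"
  show "q \<in> insert m P"
  proof (cases "p \<in> P")
    case True
    then show ?thesis using P q unfolding down_closed_def by auto
  next
    case False
    text \<open>Then p = m; if q were outside P then i q \<in> P by minimality, and so i m \<in> P.\<close>
    with p have "p = m" by auto
    show ?thesis
    proof (rule ccontr)
      assume "q \<notin> insert m P"
      then have "i q \<in> P" using minimal q \<open>p = m\<close> unfolding unoriented_def by auto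
      moreover have "i m \<le> i q" using invol_antimono q(2) \<open>p = m\<close> by auto
      moreover have "i m \<in> nondeg" using m invol_closed unfolding unoriented_def nondeg_def by auto
      ultimately show False using P m unfolding down_closed_def unoriented_def by blast
    qed
  qed
qed

text \<open>Adding a forced separation to P does not change the augmented family, so a separation
  whose addition makes it buildable is unforced.\<close>

lemma unforced_if_extension_buildable:
  assumes "\<not> buildable i (augmented P)" "buildable i (augmented (insert m P))" "m \<noteq> i m"
  shows "\<not> forces i F m"
  using assms unfolding forces_def degenerate_def augmented_def by (auto simp: insert_absorb)

text \<open>Some minimal unoriented separation can be added to P without making the augmented family
  buildable: for a minimal unoriented z and a minimal unoriented z' \<le> i z, the extension lemma
  forbids that both additions are buildable.\<close>

lemma minimal_extension:
  assumes P: "down_closed P" and nb: "\<not> buildable i (augmented P)" and U: "unoriented P \<noteq> {}"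
  obtains m where "m \<in> unoriented P" "\<forall>b\<in>unoriented P. b \<le> m \<longrightarrow> m = b"
    "\<not> buildable i (augmented (insert m P))"
proof -
  have fin_U: "finite (unoriented P)" using finite_S unfolding unoriented_def nondeg_def by auto
  have U_inv: "i x \<in> unoriented P" if "x \<in> unoriented P" for x
    using that invol_closed unfolding unoriented_def nondeg_def by auto
  obtain z where z: "z \<in> unoriented P" "\<forall>b\<in>unoriented P. b \<le> z \<longrightarrow> z = b"
    using finite_has_minimal[OF fin_U] U by blast
  obtain z' where z': "z' \<in> unoriented P" "z' \<le> i z" "\<forall>b\<in>unoriented P. b \<le> z' \<longrightarrow> z' = b"
    using finite_has_minimal2[OF fin_U U_inv[OF z(1)]] by blast
  have zS: "z \<in> Sv" "z' \<in> Sv" "z \<noteq> i z" "z' \<noteq> i z'" using z z' unfolding unoriented_def nondeg_def by auto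
  have "\<not> (buildable i (augmented (insert z' P)) \<and> buildable i (augmented (insert z P)))"
  proof
    assume b: "buildable i (augmented (insert z' P)) \<and> buildable i (augmented (insert z P))"
    then have "\<not> forces i F z'" "\<not> forces i F (i (i z))"
      using unforced_if_extension_buildable[OF nb] zS(3,4) by auto
    then show False
      using extension_lemma[OF P nb zS(2) invol_closed[OF zS(1)] z'(2)] b by (simp add: augmented_insert)
  qed
  then show ?thesis using that z z' by blast
qed

lemma tangle_exists:
  assumes "down_closed P" "\<not> buildable i (augmented P)"
  shows "\<exists>Or. is_F_tangle i Sv F Or"
  using assms
proof (induction "card (nondeg - P)" arbitrary: P rule: less_induct)
  case less
  show ?case
  proof (cases "unoriented P = {}")
    case True
    then have "\<forall>s\<in>nondeg. s \<in> P \<or> i s \<in> P" unfolding unoriented_def by auto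
    then show ?thesis
      using full_orientation down_closed_consistent down_closed_avoids less.prems
      unfolding is_F_tangle_def by blast
  next
    case False
    then obtain m where m: "m \<in> unoriented P" "\<forall>b\<in>unoriented P. b \<le> m \<longrightarrow> m = b"
      and nb: "\<not> buildable i (augmented (insert m P))"
      using minimal_extension[OF less.prems] by blast
    show ?thesis
    proof (rule less.hyps[OF _ _ nb])
      show "card (nondeg - insert m P) < card (nondeg - P)"
        using m(1) finite_S unfolding unoriented_def nondeg_def by (intro psubset_card_mono) auto
      show "down_closed (insert m P)" by (rule down_closed_insert_minimal[OF less.prems(1) m])
    qed
  qed
qed

subsection \<open>The tree side\<close>

definition S_labelling :: "(nat \<times> nat) set \<Rightarrow> (nat \<times> nat \<Rightarrow> 'a) \<Rightarrow> bool" where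
  "S_labelling E \<alpha> \<longleftrightarrow> (\<forall>u v. (u, v) \<in> E \<longrightarrow> \<alpha> (u, v) \<in> Sv \<and> \<alpha> (v, u) = i (\<alpha> (u, v)))"

definition rooted_tree ::
  "nat set \<Rightarrow> (nat \<times> nat) set \<Rightarrow> (nat \<times> nat \<Rightarrow> 'a) \<Rightarrow> nat \<Rightarrow> 'a set \<Rightarrow> bool" where
  "rooted_tree V E \<alpha> \<rho> W \<longleftrightarrow> is_tree V E \<and> \<rho> \<in> V \<and> S_labelling E \<alpha> \<and>
     (\<forall>t\<in>V - {\<rho>}. node_star E \<alpha> t \<in> F) \<and> node_star E \<alpha> \<rho> = W"

lemma S_labelling_cong:
  assumes "S_labelling E \<beta>" "\<And>e. e \<in> E \<Longrightarrow> \<alpha> e = \<beta> e" "\<And>u v. (u, v) \<in> E \<Longrightarrow> (v, u) \<in> E"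
  shows "S_labelling E \<alpha>"
  unfolding S_labelling_def
proof (intro allI impI)
  fix u v assume uv: "(u, v) \<in> E"
  then have "\<beta> (u, v) \<in> Sv \<and> \<beta> (v, u) = i (\<beta> (u, v))" using assms(1) unfolding S_labelling_def by blast
  then show "\<alpha> (u, v) \<in> Sv \<and> \<alpha> (v, u) = i (\<alpha> (u, v))" using assms(2,3) uv by metis
qed

lemma S_labelling_join:
  assumes "S_labelling E1 \<alpha>" "S_labelling E2 \<alpha>" "w \<in> Sv" "\<alpha> (v, u) = w" "\<alpha> (u, v) = i w"
  shows "S_labelling (E1 \<union> E2 \<union> {(u, v), (v, u)}) \<alpha>"
  unfolding S_labelling_def
proof (intro allI impI)
  fix a b assume "(a, b) \<in> E1 \<union> E2 \<union> {(u, v), (v, u)}"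
  then consider "(a, b) \<in> E1 \<union> E2" | "(a, b) = (u, v)" | "(a, b) = (v, u)" by blast
  then show "\<alpha> (a, b) \<in> Sv \<and> \<alpha> (b, a) = i (\<alpha> (a, b))"
  proof cases
    case 1
    then show ?thesis using assms(1,2) unfolding S_labelling_def by blast
  qed (use assms(3-5) invol_closed[OF assms(3)] in auto)
qed

lemma rooted_tree_single: "rooted_tree {0} {} \<alpha> 0 {}"
  unfolding rooted_tree_def is_tree_def S_labelling_def node_star_def by auto

lemma rooted_tree_copy:
  assumes R: "rooted_tree V E \<alpha> \<rho> W" and A: "finite A"
  obtains V' E' \<alpha>' \<rho>' where "rooted_tree V' E' \<alpha>' \<rho>' W" "V' \<inter> A = {}"
proof -
  define k where "k = Suc (Max (insert 0 A))"
  define f where "f x = x + k" for x :: nat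
  define \<alpha>' where "\<alpha>' e = \<alpha> (fst e - k, snd e - k)" for e
  let ?E = "(\<lambda>(a, b). (f a, f b)) ` E"
  have away: "f x \<notin> A" for x
    using Max_ge[OF finite.insertI[OF A], of "f x" 0] unfolding k_def f_def by auto
  have edge: "(f a, f b) \<in> ?E \<longleftrightarrow> (a, b) \<in> E" for a b
    unfolding f_def by auto
  have label: "\<alpha>' (f a, f b) = \<alpha> (a, b)" for a b
    unfolding \<alpha>'_def f_def by simp
  have star: "node_star ?E \<alpha>' (f t) = node_star E \<alpha> t" for t
    unfolding node_star_def f_def \<alpha>'_def by force
  have "S_labelling ?E \<alpha>'"
    using R edge label unfolding rooted_tree_def S_labelling_def by auto
  moreover have "is_tree (f ` V) ?E"
    using R by (intro is_tree_image) (auto simp: rooted_tree_def inj_on_def f_def)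
  moreover have "\<forall>t\<in>f ` V - {f \<rho>}. node_star ?E \<alpha>' t \<in> F"
    using R star unfolding rooted_tree_def by auto
  ultimately have "rooted_tree (f ` V) ?E \<alpha>' (f \<rho>) W"
    using R star unfolding rooted_tree_def by auto
  then show ?thesis using that away by blast
qed

lemma labelled_tree_join:
  assumes T1: "is_tree V1 E1" "S_labelling E1 \<alpha>1" and T2: "is_tree V2 E2" "S_labelling E2 \<alpha>2"
    and disj: "V1 \<inter> V2 = {}" and roots: "\<rho>1 \<in> V1" "\<rho>2 \<in> V2" and w: "w \<in> Sv"
  obtains E \<alpha> where "is_tree (V1 \<union> V2) E" "E \<noteq> {}" "S_labelling E \<alpha>"
    "\<And>t. t \<in> V1 \<Longrightarrow> node_star E \<alpha> t = node_star E1 \<alpha>1 t \<union> (if t = \<rho>1 then {w} else {})"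
    "\<And>t. t \<in> V2 \<Longrightarrow> node_star E \<alpha> t = node_star E2 \<alpha>2 t \<union> (if t = \<rho>2 then {i w} else {})"
proof -
  define E where "E = E1 \<union> E2 \<union> {(\<rho>1, \<rho>2), (\<rho>2, \<rho>1)}"
  define \<alpha> where "\<alpha> e = (if e \<in> E1 then \<alpha>1 e else if e \<in> E2 then \<alpha>2 e
    else if e = (\<rho>2, \<rho>1) then w else i w)" for e
  note E1 = is_treeD(3)[OF T1(1)] and E2 = is_treeD(3)[OF T2(1)]
  have disj': "V2 \<inter> V1 = {}" using disj by auto
  have apart: "E1 \<inter> E2 = {}" "(\<rho>2, \<rho>1) \<notin> E1 \<union> E2" "(\<rho>1, \<rho>2) \<notin> E1 \<union> E2" "\<rho>1 \<noteq> \<rho>2"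
    using E1 E2 disj roots by blast+
  have on_E1: "\<alpha> e = \<alpha>1 e" if "e \<in> E1" for e using that unfolding \<alpha>_def by simp
  have on_E2: "\<alpha> e = \<alpha>2 e" if "e \<in> E2" for e
    using that apart(1) unfolding \<alpha>_def by auto
  have new: "\<alpha> (\<rho>2, \<rho>1) = w" "\<alpha> (\<rho>1, \<rho>2) = i w"
    using apart unfolding \<alpha>_def by auto
  have "S_labelling E1 \<alpha>" "S_labelling E2 \<alpha>"
    using S_labelling_cong[OF T1(2) on_E1 is_treeD(4)[OF T1(1)]]
      S_labelling_cong[OF T2(2) on_E2 is_treeD(4)[OF T2(1)]] by auto
  then have L: "S_labelling E \<alpha>" unfolding E_def by (rule S_labelling_join[OF _ _ w new])
  have S1: "node_star E \<alpha> t = node_star E1 \<alpha>1 t \<union> (if t = \<rho>1 then {w} else {})"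
    if "t \<in> V1" for t
  proof -
    have "node_star E1 \<alpha> t = node_star E1 \<alpha>1 t" by (rule node_star_cong) (rule on_E1)
    then show ?thesis using node_star_join[OF E1 E2 disj roots that, of \<alpha>] new
      unfolding E_def by simp
  qed
  have S2: "node_star E \<alpha> t = node_star E2 \<alpha>2 t \<union> (if t = \<rho>2 then {i w} else {})"
    if "t \<in> V2" for t
  proof -
    have "E = E2 \<union> E1 \<union> {(\<rho>2, \<rho>1), (\<rho>1, \<rho>2)}" unfolding E_def by auto
    moreover have "node_star E2 \<alpha> t = node_star E2 \<alpha>2 t" by (rule node_star_cong) (rule on_E2)
    ultimately show ?thesis using node_star_join[OF E2 E1 disj' roots(2,1) that, of \<alpha>] new
      by simp
  qed
  have T: "is_tree (V1 \<union> V2) E"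
    unfolding E_def using is_tree_join[OF T1(1) T2(1) disj roots] .
  show ?thesis by (rule that[OF T _ L S1 S2]) (simp add: E_def)
qed

lemma rooted_tree_attach:
  assumes R1: "rooted_tree V1 E1 \<alpha>1 \<rho>1 W1" and R: "rooted_tree V E \<alpha> \<rho> W2"
    and w: "w \<in> Sv" and new_star: "insert (i w) W2 \<in> F"
  obtains V' E' \<alpha>' where "rooted_tree V' E' \<alpha>' \<rho>1 (insert w W1)" "E' \<noteq> {}"
proof -
  have "finite V1" using R1 is_treeD(1) unfolding rooted_tree_def by blast
  then obtain V2 E2 \<alpha>2 \<rho>2 where R2: "rooted_tree V2 E2 \<alpha>2 \<rho>2 W2" "V2 \<inter> V1 = {}"
    by (rule rooted_tree_copy[OF R])
  obtain E' \<alpha>' where J: "is_tree (V1 \<union> V2) E'" "E' \<noteq> {}" "S_labelling E' \<alpha>'"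
    "\<And>t. t \<in> V1 \<Longrightarrow> node_star E' \<alpha>' t = node_star E1 \<alpha>1 t \<union> (if t = \<rho>1 then {w} else {})"
    "\<And>t. t \<in> V2 \<Longrightarrow> node_star E' \<alpha>' t = node_star E2 \<alpha>2 t \<union> (if t = \<rho>2 then {i w} else {})"
    by (rule labelled_tree_join[of V1 E1 \<alpha>1 V2 E2 \<alpha>2 \<rho>1 \<rho>2 w])
      (use R1 R2 w in \<open>auto simp: rooted_tree_def\<close>)
  have "rooted_tree (V1 \<union> V2) E' \<alpha>' \<rho>1 (insert w W1)"
    unfolding rooted_tree_def
  proof (intro conjI ballI)
    show "is_tree (V1 \<union> V2) E'" "\<rho>1 \<in> V1 \<union> V2" "S_labelling E' \<alpha>'"
      using J(1,3) R1 unfolding rooted_tree_def by auto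
    show "node_star E' \<alpha>' \<rho>1 = insert w W1" using J(4) R1 unfolding rooted_tree_def by auto
    fix t assume "t \<in> V1 \<union> V2 - {\<rho>1}"
    then show "node_star E' \<alpha>' t \<in> F"
      using J(4,5) R1 R2 new_star unfolding rooted_tree_def by auto
  qed
  then show ?thesis using that J(2) by blast
qed

text \<open>The children
  of the root are attached one at a time.\<close>

lemma branch_rooted_tree:
  assumes "branch i F x"
  shows "\<exists>\<sigma>\<in>F. x \<in> \<sigma> \<and> (\<exists>V E \<alpha> \<rho>. rooted_tree V E \<alpha> \<rho> (\<sigma> - {x}))"
  using assms
proof (induction rule: branch.induct)
  case (branchI \<sigma> x)
  have grow: "\<exists>V E \<alpha> \<rho>. rooted_tree V E \<alpha> \<rho> W" if "finite W" "W \<subseteq> \<sigma> - {x}" for W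
    using that
  proof (induction W rule: finite_subset_induct')
    case empty
    show ?case using rooted_tree_single by blast
  next
    case (insert w W)
    obtain V1 E1 \<alpha>1 \<rho>1 where R1: "rooted_tree V1 E1 \<alpha>1 \<rho>1 W" using insert.IH by blast
    obtain \<tau> V E \<alpha> \<rho> where \<tau>: "\<tau> \<in> F" "i w \<in> \<tau>" and R: "rooted_tree V E \<alpha> \<rho> (\<tau> - {i w})"
      using branchI.IH insert.hyps(2) by blast
    have "w \<in> Sv" using insert.hyps(2) branchI.hyps(1) F_sub by auto
    obtain V' E' \<alpha>' where "rooted_tree V' E' \<alpha>' \<rho>1 (insert w W)"
      by (rule rooted_tree_attach[OF R1 R \<open>w \<in> Sv\<close>]) (use \<tau> in \<open>simp add: insert_absorb\<close>)
    then show ?case by blast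
  qed
  have "finite (\<sigma> - {x})" using F_sub finite_S branchI.hyps(1) finite_subset by blast
  from grow[OF this order_refl] show ?case using branchI.hyps(1,2) by blast
qed

text \<open>Attaching the unravelling of i x to that of x along the edge x yields an S-tree over F.\<close>

lemma buildable_S_tree:
  assumes "buildable i F"
  shows "\<exists>V E \<alpha>. S_tree_over i Sv F V E \<alpha>"
proof -
  obtain x where x: "branch i F x" "branch i F (i x)" using assms unfolding buildable_def by auto
  obtain \<sigma>1 V1 E1 \<alpha>1 \<rho>1 where \<sigma>1: "\<sigma>1 \<in> F" "x \<in> \<sigma>1"
    and R1: "rooted_tree V1 E1 \<alpha>1 \<rho>1 (\<sigma>1 - {x})"
    using branch_rooted_tree[OF x(1)] by blast
  obtain \<sigma>2 V2 E2 \<alpha>2 \<rho>2 where \<sigma>2: "\<sigma>2 \<in> F" "i x \<in> \<sigma>2"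
    and R2: "rooted_tree V2 E2 \<alpha>2 \<rho>2 (\<sigma>2 - {i x})"
    using branch_rooted_tree[OF x(2)] by blast
  have "x \<in> Sv" using \<sigma>1 F_sub by auto
  obtain V E \<alpha> where R: "rooted_tree V E \<alpha> \<rho>1 (insert x (\<sigma>1 - {x}))" and "E \<noteq> {}"
    by (rule rooted_tree_attach[OF R1 R2 \<open>x \<in> Sv\<close>]) (use \<sigma>2 in \<open>simp add: insert_absorb\<close>)
  moreover have "node_star E \<alpha> t \<in> F" if "t \<in> V" for t
    using that R \<sigma>1 unfolding rooted_tree_def by (cases "t = \<rho>1") (auto simp: insert_absorb)
  ultimately have "S_tree_over i Sv F V E \<alpha>"
    unfolding S_tree_over_def is_S_tree_def rooted_tree_def S_labelling_def node_star_def by blast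
  then show ?thesis by blast
qed
end

section \<open>Tangle-tree duality\<close>

theorem theorem4p4:
  fixes invol :: "'a::lattice \<Rightarrow> 'a"
    and Sv :: "'a set"
    and F :: "'a set set"
  assumes "universe_invol invol"
    and "sep_system invol Sv"
    and "finite Sv"
    and "F \<subseteq> Pow Sv"
    and "\<forall>\<sigma>\<in>F. is_star invol Sv \<sigma>"
    and "standard invol Sv F"
    and "F_separable invol Sv F"
  shows "((\<exists>V E \<alpha>. S_tree_over invol Sv F V E \<alpha>) \<or> (\<exists>Or. is_F_tangle invol Sv F Or)) \<and>
         \<not> ((\<exists>V E \<alpha>. S_tree_over invol Sv F V E \<alpha>) \<and> (\<exists>Or. is_F_tangle invol Sv F Or))"
proof -
  interpret tree_duality invol Sv F
    using assms by unfold_locales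
  have "(\<exists>V E \<alpha>. S_tree_over invol Sv F V E \<alpha>) \<or> (\<exists>Or. is_F_tangle invol Sv F Or)"
  proof (cases "buildable invol F")
    case True
    then show ?thesis using buildable_S_tree by blast
  next
    case False
    have "down_closed {}" "augmented {} = F" unfolding down_closed_def augmented_def by auto
    then show ?thesis using tangle_exists False by metis
  qed
  moreover have "\<not> ((\<exists>V E \<alpha>. S_tree_over invol Sv F V E \<alpha>) \<and> (\<exists>Or. is_F_tangle invol Sv F Or))"
    using S_tree_tangle_exclusive by blast
  ultimately show ?thesis by blast
qed

end
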